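(* Let $n\ge 3$ and let $S_n$ be the monoid defined below. Every element $a\in S_n$ can be written uniquely as a product $$a=a_1^{i}\,(a_1a_2\cdots a_n)^{\varepsilon}\,(a_2a_3\cdots a_n)^{j}\,b,$$ where $\varepsilon\in\{0,1\}$, $i,j$ are non-negative integers, $b\in S_n\setminus\bigl(a_1S_n\cup (a_2a_3\cdots a_n)S_n\bigr)$, and the following condition holds: if $j\ge 1$ then $\varepsilon=1$ or $i=0$. (Uniqueness means: the triple $(i,\varepsilon,j)$ and the element $b\in S_n$ are uniquely determined by $a$.)
   Context: For $n\ge 3$, $S_n$ denotes the monoid with generators $a_1,\dots,a_n$ and defining relations $a_1a_2\cdots a_n=a_{\sigma(1)}a_{\sigma(2)}\cdots a_{\sigma(n)}$ for all $\sigma$ in the cyclic subgroup of the symmetric group $\operatorname{Sym}_n$ generated by the cycle $(1,2,\dots,n)$; equivalently, $a_1a_2\cdots a_n=a_{k+1}\cdots a_na_1\cdots a_k$ for $k=1,\dots,n-1$. *)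

theory Defs
  imports Main
begin

text \<open>Words over the alphabet a_1,...,a_n are lists of natural numbers in {1..n};
  the letter k stands for the generator a_k.\<close>

definition words :: "nat \<Rightarrow> nat list set" where
  "words n = {w. set w \<subseteq> {1..n}}"

definition full_word :: "nat \<Rightarrow> nat list" where
  "full_word n = [1..<n+1]"

definition tail_word :: "nat \<Rightarrow> nat list" where
  "tail_word n = [2..<n+1]"

text \<open>One elementary rewriting step with a defining relation
  a_1...a_n = a_{k+1}...a_n a_1...a_k (k = 1..n-1), in either direction,
  inside an arbitrary context.\<close>
inductive S_step :: "nat \<Rightarrow> nat list \<Rightarrow> nat list \<Rightarrow> bool" for n where
  fwd: "1 \<le> k \<Longrightarrow> k < n \<Longrightarrow>
     S_step n (u @ full_word n @ v) (u @ rotate k (full_word n) @ v)"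
| bwd: "1 \<le> k \<Longrightarrow> k < n \<Longrightarrow>
     S_step n (u @ rotate k (full_word n) @ v) (u @ full_word n @ v)"

definition S_eq :: "nat \<Rightarrow> nat list \<Rightarrow> nat list \<Rightarrow> bool" where
  "S_eq n = (S_step n)\<^sup>*\<^sup>*"

definition in_right_ideal :: "nat \<Rightarrow> nat list \<Rightarrow> nat list \<Rightarrow> bool" where
  "in_right_ideal n p b \<longleftrightarrow> (\<exists>w\<in>words n. S_eq n b (p @ w))"

definition nf_word :: "nat \<Rightarrow> nat \<Rightarrow> nat \<Rightarrow> nat \<Rightarrow> nat list \<Rightarrow> nat list" where
  "nf_word n i e j b =
     replicate i 1 @ concat (replicate e (full_word n)) @ concat (replicate j (tail_word n)) @ b"

definition admissible :: "nat \<Rightarrow> nat \<Rightarrow> nat \<Rightarrow> nat \<Rightarrow> nat list \<Rightarrow> bool" where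
  "admissible n i e j b \<longleftrightarrow>
     e \<in> {0,1} \<and> b \<in> words n \<and>
     \<not> in_right_ideal n [1] b \<and> \<not> in_right_ideal n (tail_word n) b \<and>
     (j \<ge> 1 \<longrightarrow> e = 1 \<or> i = 0)"

end

theory Submission
  imports Defs
begin

text \<open>
  Write cyc n c m for the cyclic word a_{c+1} a_{c+2} ... of length m, indices
  taken modulo n.  The defining relations say exactly that all n cyclic rotations of the full
  word a_1...a_n are equal in S_n; consequently each of them is central.  A combinatorial
  analysis of how a cyclic prefix can overlap a rotation occurring in a word yields an
  invariant of single rewriting steps, from which we get left cancellation by every cyclic
  prefix cyc n c m (m \<le> n), in particular by a_1 and by a_2...a_n, and the swap lemma:
  a_1 x = (a_2...a_n) y forces x = (a_2...a_n) z and y = a_1 z for some z.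

  Using a_2...a_n a_1 = a_1 a_2...a_n, every element can be brought to the form
  a_1^p (a_2...a_n)^q b with b outside both right ideals (induction on length); cancellation
  and the swap lemma show that p, q and b are unique.  The normal form of the theorem
  arises by collecting one a_1 and one a_2...a_n into the full word when p, q \<ge> 1.
\<close>

definition cyc :: "nat \<Rightarrow> nat \<Rightarrow> nat \<Rightarrow> nat list" where
  "cyc n c m = map (\<lambda>i. (c + i) mod n + 1) [0..<m]"

lemma length_cyc [simp]: "length (cyc n c m) = m"
  by (simp add: cyc_def)

lemma nth_cyc: "i < m \<Longrightarrow> cyc n c m ! i = (c + i) mod n + 1"
  by (simp add: cyc_def)

lemma cyc_0 [simp]: "cyc n c 0 = []"
  by (simp add: cyc_def)

lemma cyc_1: "cyc n c (Suc 0) = [c mod n + 1]"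
  by (simp add: cyc_def)

lemma cyc_append: "cyc n c (a + b) = cyc n c a @ cyc n (c + a) b"
  by (rule nth_equalityI) (auto simp: nth_cyc nth_append add.assoc)

lemma cyc_cong: "c mod n = c' mod n \<Longrightarrow> cyc n c m = cyc n c' m"
  by (rule nth_equalityI) (auto simp: nth_cyc intro: mod_add_cong)

lemma cyc_add_n [simp]: "cyc n (c + n) m = cyc n c m"
  by (rule cyc_cong) simp

lemma cyc_eq_imp_mod: "0 < m \<Longrightarrow> cyc n c m = cyc n c' m \<Longrightarrow> c mod n = c' mod n"
  by (drule arg_cong[where f = "\<lambda>w. w ! 0"]) (simp add: nth_cyc)

lemma cyc_wrap:
  assumes "m \<le> n"
  shows "cyc n (c + m) (n - m + d) = cyc n (c + m) (n - m) @ cyc n c d"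
  using cyc_append[of n "c + m" "n - m" d] assms by simp

lemma full_word_cyc: "full_word n = cyc n 0 n"
  by (rule nth_equalityI) (auto simp: full_word_def nth_cyc simp del: upt_Suc)

lemma tail_word_cyc: "tail_word n = cyc n 1 (n - 1)"
  by (rule nth_equalityI) (auto simp: tail_word_def nth_cyc simp del: upt_Suc)

lemma rotate_full_word: "k < n \<Longrightarrow> rotate k (full_word n) = cyc n k n"
  by (rule nth_equalityI)
     (auto simp: full_word_def nth_cyc nth_rotate simp del: upt_Suc upt_Suc_append)

lemma full_word_Cons: "1 \<le> n \<Longrightarrow> full_word n = 1 # tail_word n"
  by (simp add: full_word_def tail_word_def upt_conv_Cons numeral_2_eq_2)

lemma prefix_meets_rotation:
  assumes "m \<le> n" and eq: "cyc n c m @ y = u @ cyc n e n @ v"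
  shows "(\<exists>T. u = cyc n c m @ T \<and> y = T @ cyc n e n @ v) \<or>
         (\<exists>d<m. u = cyc n c d \<and> y = cyc n (c + m) (n - m + d) @ v)"
proof -
  from append_eq_append_conv2[THEN iffD1, OF eq] obtain T where
    "(cyc n c m = u @ T \<and> T @ y = cyc n e n @ v) \<or> (cyc n c m @ T = u \<and> y = T @ cyc n e n @ v)"
    by blast
  then show ?thesis
  proof
    assume inside: "cyc n c m = u @ T \<and> T @ y = cyc n e n @ v"
    define d where "d = length u"
    show ?thesis
    proof (cases "d < m")
      case False
      with inside have "T = []" by (auto simp: d_def dest: arg_cong[where f = length])
      with inside show ?thesis by auto
    next
      case True
      have "cyc n c m = cyc n c d @ cyc n (c + d) (m - d)"
        using cyc_append[of n c d "m - d"] True by simp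
      with inside have u: "u = cyc n c d" and T: "T = cyc n (c + d) (m - d)"
        by (simp_all add: d_def)
      have "cyc n e n = cyc n e (m - d) @ cyc n (e + (m - d)) (n - (m - d))"
        using cyc_append[of n e "m - d" "n - (m - d)"] True assms by simp
      with inside T have T': "cyc n (c + d) (m - d) = cyc n e (m - d)"
        and y: "y = cyc n (e + (m - d)) (n - (m - d)) @ v"
        by (simp_all add: append_eq_append_conv)
      from cyc_eq_imp_mod[OF _ T'] True have "(c + d) mod n = e mod n" by simp
      then have "(c + d + (m - d)) mod n = (e + (m - d)) mod n" by (rule mod_add_cong) simp
      moreover have "c + d + (m - d) = c + m" and "n - (m - d) = n - m + d"
        using True assms by simp_all
      ultimately have "cyc n (e + (m - d)) (n - (m - d)) = cyc n (c + m) (n - m + d)"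
        by (metis cyc_cong)
      with u y True show ?thesis by auto
    qed
  qed blast
qed

lemma S_step_rotations:
  "S_step n w w' \<Longrightarrow> \<exists>A B e e'. w = A @ cyc n e n @ B \<and> w' = A @ cyc n e' n @ B"
  by (induction rule: S_step.induct) (metis full_word_cyc rotate_full_word)+

lemma S_step_sym: "S_step n w w' \<Longrightarrow> S_step n w' w"
  by (induction rule: S_step.induct) (auto intro: S_step.intros)

lemma S_step_context: "S_step n x y \<Longrightarrow> S_step n (P @ x @ Q) (P @ y @ Q)"
proof (induction rule: S_step.induct)
  case (fwd k u v)
  from S_step.fwd[OF fwd, of "P @ u" "v @ Q"] show ?case by simp
next
  case (bwd k u v)
  from S_step.bwd[OF bwd, of "P @ u" "v @ Q"] show ?case by simp
qed

lemma S_eq_refl [simp]: "S_eq n x x"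
  by (simp add: S_eq_def)

lemma S_eq_trans [trans]: "S_eq n x y \<Longrightarrow> S_eq n y z \<Longrightarrow> S_eq n x z"
  unfolding S_eq_def by (rule rtranclp_trans)

lemma S_eq_sym: "S_eq n x y \<Longrightarrow> S_eq n y x"
  unfolding S_eq_def
  by (induction rule: rtranclp_induct) (auto intro: converse_rtranclp_into_rtranclp S_step_sym)

lemma S_eq_context: "S_eq n x y \<Longrightarrow> S_eq n (P @ x @ Q) (P @ y @ Q)"
  unfolding S_eq_def
  by (induction rule: rtranclp_induct) (auto intro: rtranclp.rtrancl_into_rtrancl S_step_context)

lemma S_eq_length: "S_eq n x y \<Longrightarrow> length x = length y"
  unfolding S_eq_def by (induction rule: rtranclp_induct) (auto dest!: S_step_rotations)

lemma words_append [simp]: "xs @ ys \<in> words n \<longleftrightarrow> xs \<in> words n \<and> ys \<in> words n"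
  by (auto simp: words_def)

lemma words_Cons [simp]: "x # ys \<in> words n \<longleftrightarrow> x \<in> {1..n} \<and> ys \<in> words n"
  by (auto simp: words_def)

lemma words_Nil [simp]: "[] \<in> words n"
  by (simp add: words_def)

lemma cyc_words: "0 < n \<Longrightarrow> cyc n c m \<in> words n"
  by (auto simp: cyc_def words_def Suc_le_eq)

lemma S_eq_words: "S_eq n x y \<Longrightarrow> 0 < n \<Longrightarrow> x \<in> words n \<Longrightarrow> y \<in> words n"
  unfolding S_eq_def
  by (induction rule: rtranclp_induct) (auto dest!: S_step_rotations simp: cyc_words)

lemma rotations_eq:
  assumes "0 < n"
  shows "S_eq n (A @ cyc n e n @ B) (A @ cyc n e' n @ B)"
proof -
  have rot: "S_eq n (A @ full_word n @ B) (A @ cyc n c n @ B)" for c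
  proof (cases "c mod n = 0")
    case True
    then show ?thesis by (simp add: full_word_cyc cyc_cong[of c n 0])
  next
    case False
    then have "S_step n (A @ full_word n @ B) (A @ rotate (c mod n) (full_word n) @ B)"
      by (intro S_step.fwd) (simp_all add: assms)
    then show ?thesis
      by (simp add: S_eq_def rotate_full_word assms cyc_cong[of "c mod n" n c])
  qed
  show ?thesis by (rule S_eq_trans[OF S_eq_sym[OF rot] rot])
qed

lemma rotation_central:
  assumes n: "0 < n"
  shows "u \<in> words n \<Longrightarrow> S_eq n (cyc n e n @ u) (u @ cyc n e' n)"
proof (induction u arbitrary: e e')
  case Nil
  show ?case using rotations_eq[OF n, of "[]" e "[]" e'] by simp
next
  case (Cons a u)
  then obtain k where u: "u \<in> words n" and k: "a = Suc k" "k < n"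
    by (cases a) auto
  have shift: "cyc n k n @ [a] = [a] @ cyc n a n"
    using cyc_append[of n k n 1] cyc_append[of n k 1 n] k by (simp add: cyc_1)
  have "S_eq n (cyc n e n @ a # u) ([] @ cyc n k n @ [a] @ u)"
    using rotations_eq[OF n, of "[]" e "a # u" k] by simp
  also have "[] @ cyc n k n @ [a] @ u = [a] @ (cyc n a n @ u) @ []"
    using shift by (metis append.assoc append_Nil append_Nil2)
  also have "S_eq n \<dots> ([a] @ (u @ cyc n e' n) @ [])"
    by (rule S_eq_context) (rule Cons.IH[OF u])
  finally show ?case by simp
qed

lemma rotation_meets_rotation:
  assumes "cyc n c n @ y = u @ cyc n e n @ v"
  shows "(\<exists>T. u = cyc n c n @ T \<and> y = T @ cyc n e n @ v) \<or>
         (\<exists>d. u = cyc n c d \<and> y = cyc n c d @ v)"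
  using prefix_meets_rotation[OF order_refl assms] by auto

text \<open>w contains an occurrence of a rotation whose deletion leaves a word u v with x = P u v
  in S_n.  This property is stable under rewriting steps applied to w.\<close>
definition removes_rotation :: "nat \<Rightarrow> nat list \<Rightarrow> nat list \<Rightarrow> nat list \<Rightarrow> bool" where
  "removes_rotation n P x w \<longleftrightarrow>
     (\<exists>u e v. w = u @ cyc n e n @ v \<and> S_eq n x (P @ u @ v))"

text \<open>A step whose rotation starts no later than the removed one: the two are either disjoint or
  the step's rotation overlaps the removed one, which then can be taken to be the new one.\<close>
lemma removes_rotation_step_left:
  assumes n: "0 < n" and x: "S_eq n x (P @ A @ T @ v)"
    and eq: "cyc n e n @ B = T @ cyc n c n @ v"
  shows "removes_rotation n P x (A @ cyc n e' n @ B)"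
proof -
  from rotation_meets_rotation[OF eq] consider
      (apart) T' where "T = cyc n e n @ T'" "B = T' @ cyc n c n @ v"
    | (overlap) d where "T = cyc n e d" "B = cyc n e d @ v"
    by blast
  then show ?thesis
  proof cases
    case apart
    have "S_eq n x ((P @ A) @ cyc n e n @ T' @ v)" using x apart by simp
    also have "S_eq n \<dots> ((P @ A) @ cyc n e' n @ T' @ v)" by (rule rotations_eq[OF n])
    finally have "S_eq n x (P @ (A @ cyc n e' n @ T') @ v)" by simp
    moreover have "A @ cyc n e' n @ B = (A @ cyc n e' n @ T') @ cyc n c n @ v" using apart by simp
    ultimately show ?thesis unfolding removes_rotation_def by blast
  next
    case overlap
    then show ?thesis using x unfolding removes_rotation_def by auto
  qed
qed

lemma removes_rotation_step_right:
  assumes n: "0 < n" and x: "S_eq n x (P @ u @ v)"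
    and eq: "cyc n c n @ v = T @ cyc n e n @ B"
  shows "removes_rotation n P x (u @ T @ cyc n e' n @ B)"
proof -
  from rotation_meets_rotation[OF eq] consider
      (apart) T' where "T = cyc n c n @ T'" "v = T' @ cyc n e n @ B"
    | (overlap) d where "T = cyc n c d" "v = cyc n c d @ B"
    by blast
  then show ?thesis
  proof cases
    case apart
    have "S_eq n x ((P @ u @ T') @ cyc n e n @ B)" using x apart by simp
    also have "S_eq n \<dots> ((P @ u @ T') @ cyc n e' n @ B)" by (rule rotations_eq[OF n])
    finally have "S_eq n x (P @ u @ T' @ cyc n e' n @ B)" by simp
    moreover have "u @ T @ cyc n e' n @ B = u @ cyc n c n @ T' @ cyc n e' n @ B"
      using apart by simp
    ultimately show ?thesis unfolding removes_rotation_def by blast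
  next
    case overlap
    have "S_eq n x (P @ (u @ cyc n c d) @ B)" using x overlap by simp
    moreover have "u @ T @ cyc n e' n @ B = (u @ cyc n c d) @ cyc n e' n @ B"
      using overlap by simp
    ultimately show ?thesis unfolding removes_rotation_def by blast
  qed
qed

lemma removes_rotation_step:
  assumes n: "0 < n" and rem: "removes_rotation n P x w" and step: "S_step n w w'"
  shows "removes_rotation n P x w'"
proof -
  from rem obtain u c v where w: "w = u @ cyc n c n @ v" and x: "S_eq n x (P @ u @ v)"
    unfolding removes_rotation_def by blast
  from S_step_rotations[OF step] obtain A B e e'
    where wA: "w = A @ cyc n e n @ B" and w': "w' = A @ cyc n e' n @ B"
    by blast
  have "u @ (cyc n c n @ v) = A @ (cyc n e n @ B)" using w wA by simp
  then obtain T where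
    "(u = A @ T \<and> T @ cyc n c n @ v = cyc n e n @ B) \<or>
     (u @ T = A \<and> cyc n c n @ v = T @ cyc n e n @ B)"
    unfolding append_eq_append_conv2 by blast
  then show ?thesis
  proof
    assume "u = A @ T \<and> T @ cyc n c n @ v = cyc n e n @ B"
    with removes_rotation_step_left[OF n, of x P A T v e B c e'] x w' show ?thesis by simp
  next
    assume "u @ T = A \<and> cyc n c n @ v = T @ cyc n e n @ B"
    with removes_rotation_step_right[OF n x, of c T e B e'] w' show ?thesis by auto
  qed
qed

text \<open>Invariant for cancelling the cyclic prefix r = cyc n c m from r x: either w still starts
  with r followed by a word equal to x, or x equals q times w with one rotation removed,
  where q is the cyclic complement of r (so q r is a rotation).\<close>
definition cancel_inv :: "nat \<Rightarrow> nat \<Rightarrow> nat \<Rightarrow> nat list \<Rightarrow> nat list \<Rightarrow> bool" where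
  "cancel_inv n c m x w \<longleftrightarrow>
     (\<exists>y. w = cyc n c m @ y \<and> S_eq n x y) \<or> removes_rotation n (cyc n (c + m) (n - m)) x w"

lemma cancel_inv_step:
  assumes n: "0 < n" and m: "m \<le> n" and inv: "cancel_inv n c m x w" and step: "S_step n w w'"
  shows "cancel_inv n c m x w'"
  using inv unfolding cancel_inv_def
proof (elim disjE exE conjE)
  fix y assume w: "w = cyc n c m @ y" and x: "S_eq n x y"
  from S_step_rotations[OF step] obtain A B e e'
    where wA: "w = A @ cyc n e n @ B" and w': "w' = A @ cyc n e' n @ B"
    by blast
  from w wA have "cyc n c m @ y = A @ cyc n e n @ B" by simp
  from prefix_meets_rotation[OF m this] consider
      (behind) T where "A = cyc n c m @ T" "y = T @ cyc n e n @ B"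
    | (overlap) d where "A = cyc n c d" "y = cyc n (c + m) (n - m + d) @ B"
    by blast
  then show "(\<exists>y. w' = cyc n c m @ y \<and> S_eq n x y) \<or>
    removes_rotation n (cyc n (c + m) (n - m)) x w'"
  proof cases
    case behind
    have "S_eq n x (T @ cyc n e' n @ B)"
      using S_eq_trans[OF x[unfolded behind(2)] rotations_eq[OF n]] .
    moreover have "w' = cyc n c m @ T @ cyc n e' n @ B" using w' behind by simp
    ultimately show ?thesis by blast
  next
    case overlap
    have "S_eq n x (cyc n (c + m) (n - m) @ A @ B)"
      using x overlap cyc_wrap[OF m] by simp
    with w' show ?thesis unfolding removes_rotation_def by blast
  qed
next
  assume "removes_rotation n (cyc n (c + m) (n - m)) x w"
  with removes_rotation_step[OF n _ step]
  show "(\<exists>y. w' = cyc n c m @ y \<and> S_eq n x y) \<or>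
    removes_rotation n (cyc n (c + m) (n - m)) x w'" by blast
qed

lemma cancel_inv_S_eq:
  assumes "0 < n" "m \<le> n" and "S_eq n (cyc n c m @ x) w"
  shows "cancel_inv n c m x w"
  using assms(3) unfolding S_eq_def
proof (induction rule: rtranclp_induct)
  case base
  show ?case unfolding cancel_inv_def by auto
next
  case (step w w')
  then show ?case using cancel_inv_step[OF assms(1,2)] by blast
qed

lemma cyc_left_cancel:
  assumes n: "0 < n" and m: "m \<le> n"
    and eq: "S_eq n (cyc n c m @ x) (cyc n c m @ y)" and y: "y \<in> words n"
  shows "S_eq n x y"
proof -
  from cancel_inv_S_eq[OF n m eq] consider
      (prefix) "S_eq n x y"
    | (removed) u e v where "cyc n c m @ y = u @ cyc n e n @ v"
        "S_eq n x (cyc n (c + m) (n - m) @ u @ v)"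
    unfolding cancel_inv_def removes_rotation_def by auto
  then show ?thesis
  proof cases
    case removed
    from prefix_meets_rotation[OF m removed(1)] consider
        (behind) T where "u = cyc n c m @ T" "y = T @ cyc n e n @ v"
      | (overlap) d where "u = cyc n c d" "y = cyc n (c + m) (n - m + d) @ v"
      by blast
    then show ?thesis
    proof cases
      case behind
      have "S_eq n x (cyc n (c + m) (n - m) @ cyc n c m @ T @ v)"
        using removed(2) behind by simp
      also have "cyc n (c + m) (n - m) @ cyc n c m @ T @ v = [] @ (cyc n (c + m) n @ T) @ v"
        using cyc_wrap[OF m, of c m] m by simp
      also have "S_eq n \<dots> ([] @ (T @ cyc n e n) @ v)"
        using y behind by (intro S_eq_context rotation_central[OF n]) simp
      finally show ?thesis using behind by simp
    next
      case overlap
      then show ?thesis using removed(2) cyc_wrap[OF m] by simp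
    qed
  qed
qed

lemma cyc_0_n: "1 \<le> n \<Longrightarrow> cyc n 0 n = 1 # tail_word n"
  by (simp add: full_word_Cons flip: full_word_cyc)

lemma cancel_a1:
  "0 < n \<Longrightarrow> S_eq n (1 # x) (1 # y) \<Longrightarrow> y \<in> words n \<Longrightarrow> S_eq n x y"
  using cyc_left_cancel[of n 1 0 x y] by (simp add: cyc_1)

lemma cancel_tail:
  "0 < n \<Longrightarrow> S_eq n (tail_word n @ x) (tail_word n @ y) \<Longrightarrow> y \<in> words n \<Longrightarrow> S_eq n x y"
  using cyc_left_cancel[of n "n - 1" 1 x y] by (simp add: tail_word_cyc)

lemma tail_word_Cons: "2 \<le> n \<Longrightarrow> tail_word n = 2 # [3..<n+1]"
  by (simp add: tail_word_def upt_conv_Cons)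

lemma a1_tail_swap:
  assumes n: "2 \<le> n" and eq: "S_eq n (1 # x) (tail_word n @ y)" and y: "y \<in> words n"
  shows "\<exists>z. S_eq n x (tail_word n @ z) \<and> S_eq n y (1 # z)"
proof -
  have n0: "0 < n" and m: "n - 1 \<le> n" using n by simp_all
  have "cancel_inv n 0 1 x (tail_word n @ y)"
    using cancel_inv_S_eq[of n 1 0 x] eq n by (simp add: cyc_1)
  moreover have "tail_word n @ y \<noteq> cyc n 0 1 @ y'" for y'
    using n by (simp add: cyc_1 tail_word_Cons)
  ultimately obtain u e v where split: "cyc n 1 (n - 1) @ y = u @ cyc n e n @ v"
    and x: "S_eq n x (cyc n 1 (n - 1) @ u @ v)"
    unfolding cancel_inv_def removes_rotation_def by (auto simp: tail_word_cyc)
  from prefix_meets_rotation[OF m split] consider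
      (behind) T where "u = cyc n 1 (n - 1) @ T" "y = T @ cyc n e n @ v"
    | (overlap) d where "u = cyc n 1 d" "y = cyc n (1 + (n - 1)) (n - (n - 1) + d) @ v"
    by blast
  then show ?thesis
  proof cases
    case behind
    have "S_eq n ([] @ (cyc n 0 n @ T) @ v) ([] @ (T @ cyc n e n) @ v)"
      using y behind by (intro S_eq_context rotation_central[OF n0]) simp
    then have "S_eq n y (1 # tail_word n @ T @ v)"
      using behind n by (simp add: cyc_0_n S_eq_sym)
    moreover have "S_eq n x (tail_word n @ tail_word n @ T @ v)"
      using x behind by (simp add: tail_word_cyc)
    ultimately show ?thesis by blast
  next
    case overlap
    then have "y = 1 # u @ v"
      using cyc_wrap[OF m, of 1 d] n by (simp add: cyc_1)
    with x show ?thesis by (auto simp: tail_word_cyc)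
  qed
qed

abbreviation word_pow :: "nat list \<Rightarrow> nat \<Rightarrow> nat list" where
  "word_pow r p \<equiv> concat (replicate p r)"

lemma word_pow_words: "r \<in> words n \<Longrightarrow> word_pow r p \<in> words n"
  by (induction p) auto

lemma word_pow_unique:
  assumes cancel: "\<And>x y. y \<in> words n \<Longrightarrow> S_eq n (r @ x) (r @ y) \<Longrightarrow> S_eq n x y"
    and r: "r \<in> words n"
    and X: "X \<in> words n" "\<not> in_right_ideal n r X"
    and Y: "Y \<in> words n" "\<not> in_right_ideal n r Y"
  shows "S_eq n (word_pow r p @ X) (word_pow r p' @ Y) \<Longrightarrow> p = p' \<and> S_eq n X Y"
proof (induction p arbitrary: p')
  case 0
  show ?case
  proof (cases p')
    case (Suc k)
    with "0.prems" have "S_eq n X (r @ word_pow r k @ Y)" by simp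
    with X Y r word_pow_words show ?thesis unfolding in_right_ideal_def by auto
  qed (use "0.prems" in simp)
next
  case (Suc p)
  show ?case
  proof (cases p')
    case 0
    with S_eq_sym[OF Suc.prems] have "S_eq n Y (r @ word_pow r p @ X)" by simp
    with X Y r word_pow_words show ?thesis unfolding in_right_ideal_def by auto
  next
    case (Suc k)
    with Suc.prems have "S_eq n (r @ word_pow r p @ X) (r @ word_pow r k @ Y)" by simp
    with cancel r Y word_pow_words have "S_eq n (word_pow r p @ X) (word_pow r k @ Y)" by simp
    from Suc.IH[OF this] Suc show ?thesis by simp
  qed
qed

definition reduced :: "nat \<Rightarrow> nat list \<Rightarrow> bool" where
  "reduced n b \<longleftrightarrow>
     b \<in> words n \<and> \<not> in_right_ideal n [1] b \<and> \<not> in_right_ideal n (tail_word n) b"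

lemma tail_word_words: "tail_word n \<in> words n"
  by (auto simp: words_def tail_word_def)

lemma a1_ideal_tail_cancel:
  assumes n: "2 \<le> n" and y: "y \<in> words n" and ideal: "in_right_ideal n [1] (tail_word n @ y)"
  shows "in_right_ideal n [1] y"
proof -
  from ideal obtain w where w: "w \<in> words n" "S_eq n (tail_word n @ y) (1 # w)"
    unfolding in_right_ideal_def by auto
  from a1_tail_swap[OF n S_eq_sym[OF w(2)] y] obtain z
    where wz: "S_eq n w (tail_word n @ z)" and yz: "S_eq n y (1 # z)"
    by blast
  have "z \<in> words n" using S_eq_words[OF wz] w n by simp
  with yz show ?thesis unfolding in_right_ideal_def by auto
qed

lemma not_a1_ideal_tail_pow:
  assumes "2 \<le> n" and "b \<in> words n" and "\<not> in_right_ideal n [1] b"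
  shows "\<not> in_right_ideal n [1] (word_pow (tail_word n) q @ b)"
proof (induction q)
  case 0
  then show ?case using assms by simp
next
  case (Suc q)
  then show ?case
    using a1_ideal_tail_cancel[OF assms(1)] assms(2) word_pow_words[OF tail_word_words] by auto
qed

text \<open>a_2...a_n commutes with powers of a_1, as (a_2...a_n) a_1 = a_1 a_2...a_n.\<close>
lemma tail_a1_commute:
  assumes n: "2 \<le> n"
  shows "S_eq n (tail_word n @ word_pow [1] p @ X) (word_pow [1] p @ tail_word n @ X)"
proof (induction p arbitrary: X)
  case (Suc p)
  have "tail_word n @ [1] = cyc n 1 n"
    using cyc_append[of n 1 "n - 1" 1] n by (simp add: tail_word_cyc cyc_1)
  moreover have "[1] @ tail_word n = cyc n 0 n" using n by (simp add: cyc_0_n)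
  ultimately have swap: "S_eq n ((tail_word n @ [1]) @ W) (([1] @ tail_word n) @ W)" for W
    using rotations_eq[of n "[]" 1 W 0] n by simp
  have "S_eq n (tail_word n @ word_pow [1] (Suc p) @ X)
               ([1] @ (tail_word n @ word_pow [1] p @ X) @ [])"
    using swap[of "word_pow [1] p @ X"] by simp
  also have "S_eq n \<dots> ([1] @ (word_pow [1] p @ tail_word n @ X) @ [])"
    by (rule S_eq_context) (rule Suc.IH)
  finally show ?case by simp
qed simp

lemma normal_form_exists:
  assumes n: "2 \<le> n"
  shows "a \<in> words n \<Longrightarrow>
    \<exists>p q b. reduced n b \<and> S_eq n a (word_pow [1] p @ word_pow (tail_word n) q @ b)"
proof (induction "length a" arbitrary: a rule: less_induct)
  case less
  consider (a1) w where "w \<in> words n" "S_eq n a ([1] @ w)"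
    | (tail) w where "w \<in> words n" "S_eq n a (tail_word n @ w)"
    | (reduced) "reduced n a"
    using less.prems unfolding reduced_def in_right_ideal_def by blast
  then show ?case
  proof cases
    case a1
    from S_eq_length[OF a1(2)] have "length w < length a" by simp
    from less.hyps[OF this a1(1)] obtain p q b
      where b: "reduced n b" and w: "S_eq n w (word_pow [1] p @ word_pow (tail_word n) q @ b)"
      by blast
    from S_eq_context[OF w, of "[1]" "[]"]
    have "S_eq n ([1] @ w) ([1] @ word_pow [1] p @ word_pow (tail_word n) q @ b)" by simp
    with a1(2) have "S_eq n a ([1] @ word_pow [1] p @ word_pow (tail_word n) q @ b)"
      by (rule S_eq_trans)
    then have "S_eq n a (word_pow [1] (Suc p) @ word_pow (tail_word n) q @ b)" by simp
    with b show ?thesis by blast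
  next
    case tail
    from S_eq_length[OF tail(2)] n have "length w < length a" by (simp add: tail_word_def)
    from less.hyps[OF this tail(1)] obtain p q b
      where b: "reduced n b" and w: "S_eq n w (word_pow [1] p @ word_pow (tail_word n) q @ b)"
      by blast
    from S_eq_context[OF w, of "tail_word n" "[]"]
    have "S_eq n (tail_word n @ w) (tail_word n @ word_pow [1] p @ word_pow (tail_word n) q @ b)"
      by simp
    with tail(2) have "S_eq n a (tail_word n @ word_pow [1] p @ word_pow (tail_word n) q @ b)"
      by (rule S_eq_trans)
    also have "S_eq n \<dots> (word_pow [1] p @ tail_word n @ word_pow (tail_word n) q @ b)"
      using tail_a1_commute[OF n] by simp
    finally have "S_eq n a (word_pow [1] p @ word_pow (tail_word n) (Suc q) @ b)" by simp
    with b show ?thesis by blast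
  next
    case reduced
    have "S_eq n a (word_pow [1] 0 @ word_pow (tail_word n) 0 @ a)" by simp
    with reduced show ?thesis by blast
  qed
qed

text \<open>Uniqueness: first cancel the powers of a_1 (the rest is outside a_1 S_n), then the
  powers of a_2...a_n.\<close>
lemma normal_form_unique:
  assumes n: "2 \<le> n" and b: "reduced n b" and b': "reduced n b'"
    and eq: "S_eq n (word_pow [1] p @ word_pow (tail_word n) q @ b)
                    (word_pow [1] p' @ word_pow (tail_word n) q' @ b')"
  shows "p = p' \<and> q = q' \<and> S_eq n b b'"
proof -
  have n0: "0 < n" using n by simp
  have tails: "word_pow (tail_word n) k @ c \<in> words n"
    "\<not> in_right_ideal n [1] (word_pow (tail_word n) k @ c)" if "reduced n c" for k c
    using that not_a1_ideal_tail_pow[OF n] word_pow_words[OF tail_word_words]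
    unfolding reduced_def by auto
  from word_pow_unique[OF cancel_a1[OF n0] _ tails(1,2)[OF b] tails(1,2)[OF b'] eq] n
  have "p = p'" and tails_eq: "S_eq n (word_pow (tail_word n) q @ b) (word_pow (tail_word n) q' @ b')"
    by auto
  moreover have "q = q' \<and> S_eq n b b'"
    using word_pow_unique[OF cancel_tail[OF n0] tail_word_words _ _ _ _ tails_eq] b b'
    unfolding reduced_def by blast
  ultimately show ?thesis by blast
qed

lemma nf_word_eq:
  assumes "1 \<le> n" and "e \<in> {0, 1}"
  shows "nf_word n i e j b = word_pow [1] (i + e) @ word_pow (tail_word n) (e + j) @ b"
  using assms by (auto simp: nf_word_def full_word_Cons replicate_append_same)

lemma admissible_iff:
  "admissible n i e j b \<longleftrightarrow> e \<in> {0, 1} \<and> reduced n b \<and> (1 \<le> j \<longrightarrow> e = 1 \<or> i = 0)"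
  by (auto simp: admissible_def reduced_def)

lemma admissible_form_exists:
  assumes n: "2 \<le> n" and a: "a \<in> words n"
  shows "\<exists>i e j b. admissible n i e j b \<and> S_eq n a (nf_word n i e j b)"
proof -
  from normal_form_exists[OF n a] obtain p q b
    where b: "reduced n b" and eq: "S_eq n a (word_pow [1] p @ word_pow (tail_word n) q @ b)"
    by blast
  \<comment> \<open>One a_1 and one a_2...a_n combine into the full word whenever both occur.\<close>
  define e where "e = (if 1 \<le> p \<and> 1 \<le> q then 1 else 0 :: nat)"
  have "admissible n (p - e) e (q - e) b"
    using b by (auto simp: admissible_iff e_def)
  moreover have "nf_word n (p - e) e (q - e) b = word_pow [1] p @ word_pow (tail_word n) q @ b"
    using n by (auto simp: nf_word_eq e_def)
  ultimately show ?thesis using eq by metis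
qed

lemma admissible_form_unique:
  assumes n: "2 \<le> n" and adm: "admissible n i e j b" "admissible n i' e' j' b'"
    and eq: "S_eq n (nf_word n i e j b) (nf_word n i' e' j' b')"
  shows "i = i' \<and> e = e' \<and> j = j' \<and> S_eq n b b'"
proof -
  from eq adm n have "S_eq n (word_pow [1] (i + e) @ word_pow (tail_word n) (e + j) @ b)
                            (word_pow [1] (i' + e') @ word_pow (tail_word n) (e' + j') @ b')"
    by (simp add: nf_word_eq admissible_iff)
  from normal_form_unique[OF n _ _ this] adm
  have "i + e = i' + e'" "e + j = e' + j'" "S_eq n b b'" by (auto simp: admissible_iff)
  with adm show ?thesis by (auto simp: admissible_iff)
qed

theorem theorem2p1:
  fixes n :: nat
  assumes "n \<ge> 3"
  shows "\<forall>a\<in>words n.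
     (\<exists>i e j b. admissible n i e j b \<and> S_eq n a (nf_word n i e j b)) \<and>
     (\<forall>i e j b i' e' j' b'.
        admissible n i e j b \<and> S_eq n a (nf_word n i e j b) \<and>
        admissible n i' e' j' b' \<and> S_eq n a (nf_word n i' e' j' b') \<longrightarrow>
        i = i' \<and> e = e' \<and> j = j' \<and> S_eq n b b')"
proof -
  have n: "2 \<le> n" using assms by simp
  have unique: "S_eq n a (nf_word n i e j b) \<Longrightarrow> S_eq n a (nf_word n i' e' j' b') \<Longrightarrow>
      admissible n i e j b \<Longrightarrow> admissible n i' e' j' b' \<Longrightarrow>
      i = i' \<and> e = e' \<and> j = j' \<and> S_eq n b b'" for a i e j b i' e' j' b'
    by (rule admissible_form_unique[OF n]) (blast intro: S_eq_trans S_eq_sym)+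
  show ?thesis
    using admissible_form_exists[OF n] unique by blast
qed

end
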